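(* Let a partial coloring of an $n\times n$ square $A$ uniquely extend to $L(n,2n-2)$. Then there are no three distinct rows $i_1,i_2,i_3$ and three distinct columns $j_1,j_2,j_3$ such that either (a) the five entries $(i_1,j_1),(i_1,j_2),(i_2,j_2),(i_2,j_3),(i_3,j_3)$ are all uncolored; or (b) the five entries $(i_1,j_1),(i_2,j_1),(i_2,j_2),(i_3,j_2),(i_3,j_3)$ are all uncolored.
   Context: For positive integers $n,k$, let $\mathcal{L}_{n,k}$ be the set of $n\times n$ squares all of whose entries are colored with colors from a fixed set of $k$ colors $\{1,\dots,k\}$ such that any two entries in the same row, or in the same column, have different colors. Entries are indexed $(i,j)$, $i$ the row and $j$ the column. A partial coloring of an $n\times n$ square assigns colors from $\{1,\dots,k\}$ to some of its entries; the remaining entries are called uncolored. A partial coloring extends to $L(n,k)$ if the uncolored entries can be colored so that the resulting fully colored square lies in $\mathcal{L}_{n,k}$ (keeping the given colors), and it uniquely extends to $L(n,k)$ if there is exactly one such way. *)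

theory Defs
  imports Main
begin

(* A full coloring is a function
   nat => nat => nat; entries outside the square are normalized to 0 so that
   a coloring of the n x n square is represented by exactly one function. *)
definition in_L :: "nat \<Rightarrow> nat \<Rightarrow> (nat \<Rightarrow> nat \<Rightarrow> nat) \<Rightarrow> bool" where
  "in_L n k L \<longleftrightarrow>
     (\<forall>i j. (i < n \<and> j < n) \<longrightarrow> L i j \<in> {1..k}) \<and>
     (\<forall>i j. \<not> (i < n \<and> j < n) \<longrightarrow> L i j = 0) \<and>
     (\<forall>i j j'. i < n \<and> j < n \<and> j' < n \<and> j \<noteq> j' \<longrightarrow> L i j \<noteq> L i j') \<and>
     (\<forall>i i' j. i < n \<and> i' < n \<and> j < n \<and> i \<noteq> i' \<longrightarrow> L i j \<noteq> L i' j)"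

definition partial_coloring :: "nat \<Rightarrow> nat \<Rightarrow> (nat \<Rightarrow> nat \<Rightarrow> nat option) \<Rightarrow> bool" where
  "partial_coloring n k P \<longleftrightarrow>
     (\<forall>i j c. P i j = Some c \<longrightarrow> i < n \<and> j < n \<and> c \<in> {1..k})"

definition extension :: "nat \<Rightarrow> nat \<Rightarrow> (nat \<Rightarrow> nat \<Rightarrow> nat option) \<Rightarrow> (nat \<Rightarrow> nat \<Rightarrow> nat) \<Rightarrow> bool" where
  "extension n k P L \<longleftrightarrow> in_L n k L \<and> (\<forall>i j c. P i j = Some c \<longrightarrow> L i j = c)"

definition uniquely_extends :: "nat \<Rightarrow> nat \<Rightarrow> (nat \<Rightarrow> nat \<Rightarrow> nat option) \<Rightarrow> bool" where
  "uniquely_extends n k P \<longleftrightarrow> (\<exists>!L. extension n k P L)"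

end

theory Submission
  imports Defs
begin

text \<open>Let \<open>L\<close> be the unique completion and call the uncoloured cells free. Recolouring a
  free cell \<open>(i, j)\<close> with a colour absent from row \<open>i\<close> and column \<open>j\<close> would give a
  second completion, so row \<open>i\<close> and column \<open>j\<close> together carry all \<open>2n - 2\<close> colours; having
  \<open>n\<close> colours each, they share exactly two: \<open>L i j\<close> and one more. Exchanging the colours of two
  free cells in a common row (column) would also give a second completion, so one of the two
  colours already occurs in the column (row) of the other cell. For the staircase (a) these
  constraints, read on the 3\<times>3 subsquare spanned by the three rows and columns, are
  contradictory; pattern (b) is pattern (a) in the transposed square.\<close>

definition row_colors :: "(nat \<Rightarrow> nat \<Rightarrow> nat) \<Rightarrow> nat \<Rightarrow> nat \<Rightarrow> nat set" where
  "row_colors L n i = (\<lambda>j. L i j) ` {..<n}"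

definition col_colors :: "(nat \<Rightarrow> nat \<Rightarrow> nat) \<Rightarrow> nat \<Rightarrow> nat \<Rightarrow> nat set" where
  "col_colors L n j = (\<lambda>i. L i j) ` {..<n}"

definition transposed :: "(nat \<Rightarrow> nat \<Rightarrow> 'a) \<Rightarrow> nat \<Rightarrow> nat \<Rightarrow> 'a" where
  [simp]: "transposed M i j = M j i"

lemma transposed_transposed [simp]: "transposed (transposed M) = M"
  by (simp add: fun_eq_iff)

lemma in_L_transposed [simp]: "in_L n k (transposed L) \<longleftrightarrow> in_L n k L"
  unfolding in_L_def transposed_def by (intro iffI; elim conjE; intro conjI; meson)

lemma extension_transposed [simp]:
  "extension n k (transposed P) (transposed L) \<longleftrightarrow> extension n k P L"
  unfolding extension_def by auto

lemma row_colors_transposed [simp]: "row_colors (transposed L) n i = col_colors L n i"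
  unfolding row_colors_def col_colors_def by (intro image_cong) simp_all

lemma col_colors_transposed [simp]: "col_colors (transposed L) n j = row_colors L n j"
  unfolding row_colors_def col_colors_def by (intro image_cong) simp_all

lemma in_L_fun_upd_row:
  assumes L: "in_L n k L" and "i < n"
    and range: "\<And>j. j < n \<Longrightarrow> r j \<in> {1..k}" and outside: "\<And>j. n \<le> j \<Longrightarrow> r j = 0"
    and inj: "inj_on r {..<n}"
    and fresh: "\<And>a j. a < n \<Longrightarrow> j < n \<Longrightarrow> a \<noteq> i \<Longrightarrow> r j \<noteq> L a j"
  shows "in_L n k (L(i := r))"
  unfolding in_L_def
proof (intro conjI allI impI)
  fix a j assume "a < n \<and> j < n"
  then show "(L(i := r)) a j \<in> {1..k}" using L range unfolding in_L_def by auto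
next
  fix a j assume "\<not> (a < n \<and> j < n)"
  then show "(L(i := r)) a j = 0" using L outside \<open>i < n\<close> unfolding in_L_def by auto
next
  fix a j j' assume "a < n \<and> j < n \<and> j' < n \<and> j \<noteq> j'"
  then show "(L(i := r)) a j \<noteq> (L(i := r)) a j'" using L inj unfolding in_L_def inj_on_def by auto
next
  fix a a' j assume "a < n \<and> a' < n \<and> j < n \<and> a \<noteq> a'"
  then show "(L(i := r)) a j \<noteq> (L(i := r)) a' j"
    using L fresh[of a j] fresh[of a' j] unfolding in_L_def by auto
qed

lemma staircase_impossible:
  fixes R1 R2 R3 C1 C2 C3 :: "'c set"
  assumes rows: "{x11, x12, x13} \<subseteq> R1" "{x21, x22, x23} \<subseteq> R2" "{x31, x32, x33} \<subseteq> R3"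
    and cols: "{x11, x21, x31} \<subseteq> C1" "{x12, x22, x32} \<subseteq> C2" "{x13, x23, x33} \<subseteq> C3"
    and latin: "distinct [x11, x12, x13]" "distinct [x21, x22, x23]" "distinct [x31, x32, x33]"
      "distinct [x11, x21, x31]" "distinct [x12, x22, x32]" "distinct [x13, x23, x33]"
    and cover: "{x11, x12, x13, x21, x22, x23, x31, x32, x33} \<subseteq> R1 \<union> C2"
      "{x11, x12, x13, x21, x22, x23, x31, x32, x33} \<subseteq> R2 \<union> C2"
      "{x11, x12, x13, x21, x22, x23, x31, x32, x33} \<subseteq> R2 \<union> C3"
    and common: "R1 \<inter> C1 \<subseteq> {x11, t11}" "R1 \<inter> C2 \<subseteq> {x12, t12}" "R2 \<inter> C2 \<subseteq> {x22, t22}"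
      "R2 \<inter> C3 \<subseteq> {x23, t23}" "R3 \<inter> C3 \<subseteq> {x33, t33}"
    and swaps: "x12 \<in> C1 \<or> x11 \<in> C2" "x22 \<in> R1 \<or> x12 \<in> R2"
      "x23 \<in> C2 \<or> x22 \<in> C3" "x33 \<in> R2 \<or> x23 \<in> R3"
  shows False
proof -
  have common_color: "z \<in> R1 \<Longrightarrow> z \<in> C1 \<Longrightarrow> z = x11 \<or> z = t11"
    "z \<in> R1 \<Longrightarrow> z \<in> C2 \<Longrightarrow> z = x12 \<or> z = t12"
    "z \<in> R2 \<Longrightarrow> z \<in> C2 \<Longrightarrow> z = x22 \<or> z = t22"
    "z \<in> R2 \<Longrightarrow> z \<in> C3 \<Longrightarrow> z = x23 \<or> z = t23"
    "z \<in> R3 \<Longrightarrow> z \<in> C3 \<Longrightarrow> z = x33 \<or> z = t33" for z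
    using common by blast+
  \<comment> \<open>By hand: split on whether \<open>x31\<close> lies in \<open>R1\<close> or in \<open>C2\<close>, then on where \<open>x13\<close>
    (resp. \<open>x32\<close>) lies; in each of the four cases the constraints propagate to a contradiction.\<close>
  show False
    using rows cols latin cover swaps
      common_color[of x11] common_color[of x12] common_color[of x13]
      common_color[of x21] common_color[of x22] common_color[of x23]
      common_color[of x31] common_color[of x32] common_color[of x33]
    by simp smt
qed

locale unique_completion =
  fixes n k :: nat and P :: "nat \<Rightarrow> nat \<Rightarrow> nat option" and L :: "nat \<Rightarrow> nat \<Rightarrow> nat"
  assumes completion: "extension n k P L"
    and unique: "extension n k P L' \<Longrightarrow> L' = L"

lemma uniquely_extendsE:
  assumes "uniquely_extends n k P"
  obtains L where "unique_completion n k P L"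
  using assms unfolding uniquely_extends_def unique_completion_def by blast

lemma unique_completion_transposed:
  assumes "unique_completion n k P L"
  shows "unique_completion n k (transposed P) (transposed L)"
proof
  interpret unique_completion n k P L by fact
  show "extension n k (transposed P) (transposed L)"
    using completion by simp
  fix L' assume "extension n k (transposed P) L'"
  then have "extension n k P (transposed L')"
    using extension_transposed[of n k P "transposed L'"] by simp
  then have "transposed L' = L" by (rule unique)
  then show "L' = transposed L" by auto
qed

context unique_completion
begin

lemma in_L_completion: "in_L n k L"
  using completion unfolding extension_def by simp

lemma color_range: "i < n \<Longrightarrow> j < n \<Longrightarrow> L i j \<in> {1..k}"
  using in_L_completion unfolding in_L_def by blast

lemma row_distinct: "i < n \<Longrightarrow> j < n \<Longrightarrow> j' < n \<Longrightarrow> j \<noteq> j' \<Longrightarrow> L i j \<noteq> L i j'"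
  using in_L_completion unfolding in_L_def by blast

lemma col_distinct: "i < n \<Longrightarrow> i' < n \<Longrightarrow> j < n \<Longrightarrow> i \<noteq> i' \<Longrightarrow> L i j \<noteq> L i' j"
  using in_L_completion unfolding in_L_def by blast

lemma card_row_colors: "i < n \<Longrightarrow> card (row_colors L n i) = n"
  unfolding row_colors_def by (metis card_image card_lessThan inj_onI lessThan_iff row_distinct)

lemma card_col_colors: "j < n \<Longrightarrow> card (col_colors L n j) = n"
  unfolding col_colors_def by (metis card_image card_lessThan inj_onI lessThan_iff col_distinct)

lemma free_cell_row_col_colors:
  assumes free: "P i j = None" and ij: "i < n" "j < n"
  shows "row_colors L n i \<union> col_colors L n j = {1..k}"
proof (rule ccontr)
  assume "row_colors L n i \<union> col_colors L n j \<noteq> {1..k}"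
  moreover have "row_colors L n i \<union> col_colors L n j \<subseteq> {1..k}"
    using color_range ij unfolding row_colors_def col_colors_def by auto
  ultimately obtain c where c: "c \<in> {1..k}" and missing: "c \<notin> row_colors L n i \<union> col_colors L n j"
    by blast
  define L' where "L' = L(i := (L i)(j := c))"
  have "in_L n k L'"
    unfolding L'_def
  proof (rule in_L_fun_upd_row[OF in_L_completion \<open>i < n\<close>])
    show "inj_on ((L i)(j := c)) {..<n}"
      using row_distinct[OF \<open>i < n\<close>] missing unfolding row_colors_def inj_on_def by auto
  qed (use in_L_completion missing c ij in \<open>auto simp: in_L_def col_colors_def\<close>)
  then have "extension n k P L'"
    using completion free unfolding extension_def L'_def by auto
  then have "L' i j = L i j" using unique by simp
  then show False using missing ij unfolding L'_def row_colors_def by auto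
qed

lemma free_cells_row_swap:
  assumes free: "P i j = None" "P i j' = None" and ij: "i < n" "j < n" "j' < n" "j \<noteq> j'"
  shows "L i j' \<in> col_colors L n j \<or> L i j \<in> col_colors L n j'"
proof (rule ccontr)
  assume missing: "\<not> (L i j' \<in> col_colors L n j \<or> L i j \<in> col_colors L n j')"
  define L' where "L' = L(i := (L i)(j := L i j', j' := L i j))"
  have "in_L n k L'"
    unfolding L'_def
  proof (rule in_L_fun_upd_row[OF in_L_completion \<open>i < n\<close>])
    show "inj_on ((L i)(j := L i j', j' := L i j)) {..<n}"
      using row_distinct[OF \<open>i < n\<close>] ij unfolding inj_on_def by auto
  qed (use in_L_completion missing ij in \<open>auto simp: in_L_def col_colors_def\<close>)
  then have "extension n k P L'"
    using completion free unfolding extension_def L'_def by auto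
  then have "L' i j = L i j" using unique by simp
  then show False using row_distinct ij unfolding L'_def by auto
qed

lemma free_cells_col_swap:
  assumes "P i j = None" "P i' j = None" and "i < n" "i' < n" "j < n" "i \<noteq> i'"
  shows "L i' j \<in> row_colors L n i \<or> L i j \<in> row_colors L n i'"
proof -
  interpret transposed: unique_completion n k "transposed P" "transposed L"
    using unique_completion_transposed unique_completion_axioms .
  show ?thesis
    using transposed.free_cells_row_swap[of j i i'] assms by simp
qed

lemma card_common_colors_free_cell:
  assumes "P i j = None" and "i < n" "j < n"
  shows "card (row_colors L n i \<inter> col_colors L n j) = 2 * n - k"
proof -
  have "finite (row_colors L n i)" "finite (col_colors L n j)"
    unfolding row_colors_def col_colors_def by simp_all
  then show ?thesis
    using card_Un_Int[of "row_colors L n i" "col_colors L n j"] free_cell_row_col_colors[OF assms]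
      assms
    by (simp add: card_row_colors card_col_colors)
qed

lemma common_colors_free_cell:
  assumes "k = 2 * n - 2" and "P i j = None" and "i < n" "j < n"
  obtains t where "row_colors L n i \<inter> col_colors L n j = {L i j, t}"
proof -
  have "L i j \<in> row_colors L n i \<inter> col_colors L n j"
    using assms unfolding row_colors_def col_colors_def by auto
  moreover have "card (row_colors L n i \<inter> col_colors L n j) = 2"
    using card_common_colors_free_cell[of i j] assms by simp
  ultimately show thesis
    using that by (metis card_2_iff insert_commute insertE singletonD)
qed

lemma no_free_staircase:
  assumes k: "k = 2 * n - 2"
    and rows: "i1 < n" "i2 < n" "i3 < n" "i1 \<noteq> i2" "i1 \<noteq> i3" "i2 \<noteq> i3"
    and cols: "j1 < n" "j2 < n" "j3 < n" "j1 \<noteq> j2" "j1 \<noteq> j3" "j2 \<noteq> j3"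
    and free: "P i1 j1 = None" "P i1 j2 = None" "P i2 j2 = None" "P i2 j3 = None" "P i3 j3 = None"
  shows False
proof -
  let ?R = "row_colors L n" and ?C = "col_colors L n"
  let ?grid = "{L i1 j1, L i1 j2, L i1 j3, L i2 j1, L i2 j2, L i2 j3, L i3 j1, L i3 j2, L i3 j3}"
  have in_lines: "L a b \<in> ?R a" "L a b \<in> ?C b" if "a < n" "b < n" for a b
    using that unfolding row_colors_def col_colors_def by auto
  have grid_colors: "?grid \<subseteq> {1..k}"
    using color_range rows cols by simp
  obtain t11 t12 t22 t23 t33 where
    "?R i1 \<inter> ?C j1 = {L i1 j1, t11}" "?R i1 \<inter> ?C j2 = {L i1 j2, t12}"
    "?R i2 \<inter> ?C j2 = {L i2 j2, t22}" "?R i2 \<inter> ?C j3 = {L i2 j3, t23}"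
    "?R i3 \<inter> ?C j3 = {L i3 j3, t33}"
    by (metis common_colors_free_cell k free rows cols)
  then have common: "?R i1 \<inter> ?C j1 \<subseteq> {L i1 j1, t11}" "?R i1 \<inter> ?C j2 \<subseteq> {L i1 j2, t12}"
    "?R i2 \<inter> ?C j2 \<subseteq> {L i2 j2, t22}" "?R i2 \<inter> ?C j3 \<subseteq> {L i2 j3, t23}"
    "?R i3 \<inter> ?C j3 \<subseteq> {L i3 j3, t33}"
    by simp_all
  have cover: "?grid \<subseteq> ?R i1 \<union> ?C j2" "?grid \<subseteq> ?R i2 \<union> ?C j2" "?grid \<subseteq> ?R i2 \<union> ?C j3"
    using grid_colors free_cell_row_col_colors free rows cols by simp_all
  have lines: "{L i1 j1, L i1 j2, L i1 j3} \<subseteq> ?R i1" "{L i2 j1, L i2 j2, L i2 j3} \<subseteq> ?R i2"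
    "{L i3 j1, L i3 j2, L i3 j3} \<subseteq> ?R i3" "{L i1 j1, L i2 j1, L i3 j1} \<subseteq> ?C j1"
    "{L i1 j2, L i2 j2, L i3 j2} \<subseteq> ?C j2" "{L i1 j3, L i2 j3, L i3 j3} \<subseteq> ?C j3"
    using in_lines rows cols by simp_all
  have latin: "distinct [L i1 j1, L i1 j2, L i1 j3]" "distinct [L i2 j1, L i2 j2, L i2 j3]"
    "distinct [L i3 j1, L i3 j2, L i3 j3]" "distinct [L i1 j1, L i2 j1, L i3 j1]"
    "distinct [L i1 j2, L i2 j2, L i3 j2]" "distinct [L i1 j3, L i2 j3, L i3 j3]"
    using row_distinct col_distinct rows cols by simp_all
  have swaps: "L i1 j2 \<in> ?C j1 \<or> L i1 j1 \<in> ?C j2" "L i2 j2 \<in> ?R i1 \<or> L i1 j2 \<in> ?R i2"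
    "L i2 j3 \<in> ?C j2 \<or> L i2 j2 \<in> ?C j3" "L i3 j3 \<in> ?R i2 \<or> L i2 j3 \<in> ?R i3"
    using free_cells_row_swap free_cells_col_swap free rows cols by simp_all
  show False
    using staircase_impossible[OF lines latin cover common swaps] .
qed

end

theorem lemma4:
  fixes n :: nat and P :: "nat \<Rightarrow> nat \<Rightarrow> nat option"
  assumes "partial_coloring n (2 * n - 2) P"
    and "uniquely_extends n (2 * n - 2) P"
  shows "\<not> (\<exists>i1 i2 i3 j1 j2 j3.
            i1 < n \<and> i2 < n \<and> i3 < n \<and> j1 < n \<and> j2 < n \<and> j3 < n \<and>
            i1 \<noteq> i2 \<and> i1 \<noteq> i3 \<and> i2 \<noteq> i3 \<and>
            j1 \<noteq> j2 \<and> j1 \<noteq> j3 \<and> j2 \<noteq> j3 \<and>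
            ((P i1 j1 = None \<and> P i1 j2 = None \<and> P i2 j2 = None \<and>
              P i2 j3 = None \<and> P i3 j3 = None) \<or>
             (P i1 j1 = None \<and> P i2 j1 = None \<and> P i2 j2 = None \<and>
              P i3 j2 = None \<and> P i3 j3 = None)))"
proof -
  obtain L where L: "unique_completion n (2 * n - 2) P L"
    using assms(2) by (rule uniquely_extendsE)
  interpret unique_completion n "2 * n - 2" P L by (fact L)
  interpret transposed: unique_completion n "2 * n - 2" "transposed P" "transposed L"
    using L by (rule unique_completion_transposed)
  show ?thesis
    using no_free_staircase transposed.no_free_staircase[simplified] by metis
qed

end
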